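(* Let $\Pi\subseteq\Sigma$ and suppose the dual cone $\check\sigma_\Pi=\{m\in M_\mathbb{R}:\langle m,n\rangle\ge0\ \forall n\in\sigma_\Pi\}$ has dimension $d$. Then either $\Pi=\Sigma$ or the simplicial complex $\Pi\cap\Xi$ is contractible.
   Context: $N\cong\mathbb{Z}^d$, $M=\operatorname{Hom}(N,\mathbb{Z})$, $\sigma\subset N_\mathbb{R}$ a strongly convex rational polyhedral cone of dimension $d$, $\Sigma=\sigma(1)$ its set of rays with primitive generators $n(\rho)$. $\sigma_\Pi$ is the cone generated over $\mathbb{R}_{\ge0}$ by $-n(\rho)$, $\rho\in\Pi$, and $n(\rho)$, $\rho\in\Sigma\setminus\Pi$. For $\Upsilon\subseteq\Sigma$, $\tau_\Upsilon$ is the minimal face of $\sigma$ whose set of rays contains $\Upsilon$. $\Xi=\{\Upsilon\subseteq\Sigma:\tau_\Upsilon\ne\sigma\}$, a simplicial complex on the vertex set $\Sigma$, and $\Pi\cap\Xi=\{\Upsilon\in\Xi:\Upsilon\subseteq\Pi\}$. Following the paper's convention for the empty simplex, for $\Pi=\emptyset$ the complex $\Pi\cap\Xi$ is regarded as contractible (acyclic). *)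

theory Defs
  imports "HOL-Analysis.Analysis"
begin

text \<open>Lattice N = integer points of real^'n; N_R = real^'n; M_R identified with real^'n via the inner product.\<close>

definition lattice_pt :: "real^'n \<Rightarrow> bool" where
  "lattice_pt v \<longleftrightarrow> (\<forall>i. v $ i \<in> \<int>)"

definition gen_cone :: "(real^'n) set \<Rightarrow> (real^'n) set" where
  "gen_cone S = {y. \<exists>c. (\<forall>v\<in>S. c v \<ge> 0) \<and> y = (\<Sum>v\<in>S. c v *\<^sub>R v)}"

definition rational_polyhedral_cone :: "(real^'n) set \<Rightarrow> bool" where
  "rational_polyhedral_cone \<sigma> \<longleftrightarrow> (\<exists>S. finite S \<and> (\<forall>v\<in>S. lattice_pt v) \<and> \<sigma> = gen_cone S)"

definition strongly_convex :: "(real^'n) set \<Rightarrow> bool" where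
  "strongly_convex \<sigma> \<longleftrightarrow> \<sigma> \<inter> uminus ` \<sigma> = {0}"

definition rays :: "(real^'n) set \<Rightarrow> (real^'n) set set" where
  "rays \<sigma> = {\<rho>. \<rho> face_of \<sigma> \<and> aff_dim \<rho> = 1}"

definition prim_gen :: "(real^'n) set \<Rightarrow> real^'n" where
  "prim_gen \<rho> = (THE v. v \<in> \<rho> \<and> lattice_pt v \<and> v \<noteq> 0 \<and>
       (\<forall>w\<in>\<rho>. lattice_pt w \<longrightarrow> (\<exists>k::nat. w = real k *\<^sub>R v)))"

definition sigma_Pi :: "(real^'n) set \<Rightarrow> (real^'n) set set \<Rightarrow> (real^'n) set" where
  "sigma_Pi \<sigma> P = gen_cone ((\<lambda>\<rho>. - prim_gen \<rho>) ` P \<union> prim_gen ` (rays \<sigma> - P))"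

definition dual_cone :: "(real^'n) set \<Rightarrow> (real^'n) set" where
  "dual_cone C = {m. \<forall>n\<in>C. 0 \<le> m \<bullet> n}"

definition min_face :: "(real^'n) set \<Rightarrow> (real^'n) set set \<Rightarrow> (real^'n) set" where
  "min_face \<sigma> \<Upsilon> = \<Inter>{F. F face_of \<sigma> \<and> \<Upsilon> \<subseteq> {\<rho>\<in>rays \<sigma>. \<rho> \<subseteq> F}}"

definition Xi :: "(real^'n) set \<Rightarrow> (real^'n) set set set" where
  "Xi \<sigma> = {\<Upsilon>. \<Upsilon> \<subseteq> rays \<sigma> \<and> min_face \<sigma> \<Upsilon> \<noteq> \<sigma>}"

text \<open>Geometric realization of an abstract simplicial complex K on vertex set V, as a subspace
  of the product space R^V: barycentric coordinate functions whose support is a simplex of K.\<close>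
definition geom_real :: "'a set \<Rightarrow> 'a set set \<Rightarrow> ('a \<Rightarrow> real) topology" where
  "geom_real V K = subtopology (powertop_real V)
     {x \<in> extensional V. (\<forall>v\<in>V. 0 \<le> x v) \<and> (\<Sum>v\<in>V. x v) = 1 \<and> {v\<in>V. x v \<noteq> 0} \<in> K}"

end

theory Submission
  imports Defs
begin

text \<open>
  Choose \<open>m\<close> in the interior of the dual of \<open>\<sigma>\<^sub>\<Pi>\<close>: it is negative on the primitive
  generators of the rays in \<open>\<Pi>\<close> and positive on the others. A point \<open>x\<close> of the realization
  of \<open>\<Pi> \<inter> \<Xi>\<close> gives the point \<open>\<Sum> x\<^sub>\<rho> n(\<rho>)\<close> of \<open>\<sigma>\<close>, which lies on the boundary of \<open>\<sigma>\<close>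
  and in the open halfspace \<open>m < 0\<close>; rescale it into the slice \<open>m = -1\<close>. There, contract
  linearly to a fixed point \<open>g\<close>, and push every point of the path back onto the boundary of
  \<open>\<sigma>\<close> along a vector \<open>e\<close> in the interior of \<open>\<sigma>\<close> with \<open>m \<bullet> e = 0\<close>. A boundary point \<open>y\<close>
  with \<open>m \<bullet> y < 0\<close> returns to the complex through continuous weights, built from products of
  facet inequalities, that are supported exactly on the rays in \<open>\<Pi>\<close> of the smallest face
  containing \<open>y\<close>; this face is proper and, since \<open>m \<bullet> y < 0\<close>, contains a ray of \<open>\<Pi>\<close>.
  Finally, the identity is joined to the start of this contraction by a straight-line
  homotopy, because a point and its image are supported on the rays of a common simplex.
\<close>

section \<open>Finitely generated convex cones and their faces\<close>

lemma convex_cone_sum: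
  assumes "convex_cone C" and "\<And>i. i \<in> I \<Longrightarrow> 0 \<le> c i \<and> u i \<in> C"
  shows "(\<Sum>i\<in>I. c i *\<^sub>R u i) \<in> C"
proof (cases "finite I")
  case True
  then show ?thesis using assms(2)
    by (induction I rule: finite_induct)
       (auto simp: convex_cone_contains_0[OF assms(1)] intro!: convex_cone_add[OF assms(1)]
          convex_cone_scaleR[OF assms(1)])
qed (simp add: convex_cone_contains_0[OF assms(1)])

lemma convex_cone_gen_cone: "convex_cone (gen_cone S)"
  unfolding convex_cone_iff
proof (intro conjI ballI allI impI)
  show "0 \<in> gen_cone S" unfolding gen_cone_def by (auto intro!: exI[where x="\<lambda>v. 0"])
next
  fix x y assume "x \<in> gen_cone S" "y \<in> gen_cone S"
  then obtain a b where "\<forall>v\<in>S. 0 \<le> a v" "x = (\<Sum>v\<in>S. a v *\<^sub>R v)"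
      and "\<forall>v\<in>S. 0 \<le> b v" "y = (\<Sum>v\<in>S. b v *\<^sub>R v)"
    unfolding gen_cone_def by auto
  then show "x + y \<in> gen_cone S" unfolding gen_cone_def
    by (auto intro!: exI[where x="\<lambda>v. a v + b v"] simp: sum.distrib scaleR_add_left)
next
  fix x and c :: real assume "x \<in> gen_cone S" "0 \<le> c"
  then obtain a where "\<forall>v\<in>S. 0 \<le> a v" "x = (\<Sum>v\<in>S. a v *\<^sub>R v)"
    unfolding gen_cone_def by auto
  then show "c *\<^sub>R x \<in> gen_cone S" unfolding gen_cone_def using \<open>0 \<le> c\<close>
    by (auto intro!: exI[where x="\<lambda>v. c * a v"] simp: scaleR_sum_right)
qed

lemma gen_cone_eq_convex_cone_hull:
  assumes "finite S"
  shows "gen_cone S = convex_cone hull S"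
proof
  show "gen_cone S \<subseteq> convex_cone hull S"
    unfolding gen_cone_def
    using convex_cone_sum[OF convex_cone_convex_cone_hull[of S], of S _ "\<lambda>v. v"]
    by (auto simp: hull_inc)
  have "s \<in> gen_cone S" if "s \<in> S" for s
  proof -
    have "(\<Sum>v\<in>S. (if v = s then 1 else 0) *\<^sub>R v) = (\<Sum>v\<in>S. if v = s then v else 0)"
      by (rule sum.cong) auto
    also have "\<dots> = s" using assms that by simp
    finally show ?thesis unfolding gen_cone_def
      by (intro CollectI exI[where x="\<lambda>v. if v = s then 1 else 0"]) auto
  qed
  then show "convex_cone hull S \<subseteq> gen_cone S"
    by (intro hull_minimal convex_cone_gen_cone) auto
qed

definition halfline :: "'a::real_vector \<Rightarrow> 'a set" where
  "halfline s = {t *\<^sub>R s | t. 0 \<le> t}"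

lemma halfline_mem: "0 \<le> t \<Longrightarrow> t *\<^sub>R s \<in> halfline s"
  by (auto simp: halfline_def)

lemma halfline_self: "s \<in> halfline s"
  using halfline_mem[of 1 s] by simp

lemma halfline_scaleR: "0 < c \<Longrightarrow> halfline (c *\<^sub>R s) = halfline s"
  unfolding halfline_def
proof (intro set_eqI iffI)
  fix x assume "0 < c" "x \<in> {t *\<^sub>R c *\<^sub>R s |t. 0 \<le> t}"
  then obtain t where "0 \<le> t" "x = t *\<^sub>R c *\<^sub>R s" by auto
  then show "x \<in> {t *\<^sub>R s |t. 0 \<le> t}" using \<open>0 < c\<close> by (auto intro!: exI[where x="t * c"])
next
  fix x assume "0 < c" "x \<in> {t *\<^sub>R s |t. 0 \<le> t}"
  then obtain t where "0 \<le> t" "x = t *\<^sub>R s" by auto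
  then show "x \<in> {t *\<^sub>R c *\<^sub>R s |t. 0 \<le> t}" using \<open>0 < c\<close> by (auto intro!: exI[where x="t / c"])
qed

lemma convex_cone_hull_singleton: "convex_cone hull {s} = halfline s"
  by (auto simp: convex_cone_hull_convex_hull_nonempty halfline_def)

lemma aff_dim_halfline:
  fixes s :: "'a::euclidean_space"
  assumes "s \<noteq> 0"
  shows "aff_dim (halfline s) = 1"
proof -
  have "0 \<in> affine hull (halfline s)"
    using halfline_mem[of 0 s] by (simp add: hull_inc)
  then have "aff_dim (halfline s) = int (dim (halfline s))" by (rule aff_dim_zero)
  moreover have "span (halfline s) = span {s}"
  proof
    show "span (halfline s) \<subseteq> span {s}"
      by (rule span_minimal) (auto simp: halfline_def intro: span_mul span_base)
    show "span {s} \<subseteq> span (halfline s)"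
      by (rule span_mono) (simp add: halfline_self)
  qed
  then have "dim (halfline s) = dim {s}" by (rule span_eq_dim)
  ultimately show ?thesis using assms by simp
qed

lemma convex_cone_face_of:
  assumes "convex_cone S" and "F face_of S" and "F \<noteq> {}"
  shows "convex_cone F"
  using assms face_of_conic face_of_imp_convex unfolding convex_cone_def by blast

lemma face_of_convex_cone_add_left:
  assumes S: "convex_cone S" and F: "F face_of S"
    and "a \<in> S" "b \<in> S" "a + b \<in> F"
  shows "a \<in> F"
proof -
  have "midpoint a b \<in> F"
    using conic_mul[OF face_of_conic[OF _ F], of "a + b" "1/2"] S assms(5)
    by (simp add: convex_cone_def midpoint_def inverse_eq_divide)
  then show ?thesis
  proof (cases "a = b")
    case False
    then show ?thesis using face_ofD[OF F _ \<open>a \<in> S\<close> \<open>b \<in> S\<close> \<open>midpoint a b \<in> F\<close>] by simp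
  qed simp
qed

lemma face_of_convex_cone_sum:
  assumes S: "convex_cone S" and F: "F face_of S" and "finite I"
    and nonneg: "\<And>i. i \<in> I \<Longrightarrow> 0 \<le> c i \<and> u i \<in> S"
    and sum_in: "(\<Sum>i\<in>I. c i *\<^sub>R u i) \<in> F" and "k \<in> I" "0 < c k"
  shows "u k \<in> F"
proof -
  have "c k *\<^sub>R u k + (\<Sum>i\<in>I - {k}. c i *\<^sub>R u i) \<in> F"
    using sum_in \<open>finite I\<close> \<open>k \<in> I\<close> by (simp add: sum.remove)
  moreover have "(\<Sum>i\<in>I - {k}. c i *\<^sub>R u i) \<in> S"
    using nonneg by (intro convex_cone_sum[OF S]) auto
  ultimately have "c k *\<^sub>R u k \<in> F"
    using face_of_convex_cone_add_left[OF S F] nonneg \<open>k \<in> I\<close> convex_cone_scaleR[OF S] by blast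
  moreover have "conic F" using face_of_conic[OF _ F] S by (simp add: convex_cone_def)
  ultimately show ?thesis
    using conic_mul[of F "c k *\<^sub>R u k" "1 / c k"] \<open>0 < c k\<close> by simp
qed

lemma face_of_convex_cone_by_sums:
  assumes K: "convex_cone K" and F: "convex_cone F" "F \<subseteq> K"
    and sums: "\<And>a b. a \<in> K \<Longrightarrow> b \<in> K \<Longrightarrow> a + b \<in> F \<Longrightarrow> a \<in> F"
  shows "F face_of K"
proof -
  have "a \<in> F" if ab: "a \<in> K" "b \<in> K" and x: "x \<in> open_segment a b" "x \<in> F" for a b x
  proof -
    obtain u where u: "0 < u" "u < 1" "x = (1 - u) *\<^sub>R a + u *\<^sub>R b"
      using x(1) by (auto simp: in_segment)
    then have "(1 - u) *\<^sub>R a \<in> F"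
      using sums[of "(1 - u) *\<^sub>R a" "u *\<^sub>R b"] ab x(2) convex_cone_scaleR[OF K] by auto
    moreover have "0 \<le> 1 / (1 - u)" using u by simp
    ultimately have "(1 / (1 - u)) *\<^sub>R ((1 - u) *\<^sub>R a) \<in> F"
      using convex_cone_scaleR[OF F(1)] by blast
    then show ?thesis using u by simp
  qed
  then show ?thesis
    unfolding face_of_def using F by (metis convex_cone_def open_segment_commute)
qed

lemma halfline_face_of_convex_cone_hull:
  assumes pointed: "\<And>x. x \<in> convex_cone hull S \<Longrightarrow> - x \<in> convex_cone hull S \<Longrightarrow> x = 0"
    and "s \<in> S" and irredundant: "s \<notin> convex_cone hull (S - {s})"
  shows "halfline s face_of convex_cone hull S"
proof (rule face_of_convex_cone_by_sums)
  let ?K = "convex_cone hull S" and ?C = "convex_cone hull (S - {s})"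
  show "convex_cone ?K" "convex_cone (halfline s)"
    using convex_cone_convex_cone_hull convex_cone_hull_singleton by metis+
  show "halfline s \<subseteq> ?K"
    using convex_cone_hull_singleton[of s] hull_mono[of "{s}" S] \<open>s \<in> S\<close> by auto
  have zero_summands: "x = 0" if "x \<in> ?K" "y \<in> ?K" "x + y = 0" for x y
  proof -
    have "y = - x" using \<open>x + y = 0\<close> by (simp add: eq_neg_iff_add_eq_0 add.commute)
    then show ?thesis using pointed that by simp
  qed
  have C_sub: "?C \<subseteq> ?K" by (simp add: hull_mono)
  have "?K = (\<Union>x \<in> halfline s. \<Union>y \<in> ?C. {x + y})"
    using convex_cone_hull_Un[of "{s}" "S - {s}"] \<open>s \<in> S\<close>
    by (simp add: convex_cone_hull_singleton insert_absorb)
  then have decompose: "\<exists>\<alpha> x'. 0 \<le> \<alpha> \<and> x' \<in> ?C \<and> x = \<alpha> *\<^sub>R s + x'" if "x \<in> ?K" for x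
    using that by (auto simp: halfline_def)
  fix a b assume "a \<in> ?K" "b \<in> ?K" "a + b \<in> halfline s"
  then obtain \<alpha> \<beta> a' b' t where ab: "0 \<le> \<alpha>" "a' \<in> ?C" "a = \<alpha> *\<^sub>R s + a'"
      "0 \<le> \<beta>" "b' \<in> ?C" "b = \<beta> *\<^sub>R s + b'" and "a + b = t *\<^sub>R s"
    using decompose by (auto simp: halfline_def) metis
  then have eq: "a' + b' = (t - \<alpha> - \<beta>) *\<^sub>R s" by (simp add: algebra_simps)
  have "a' + b' \<in> ?C" using ab by (simp add: convex_cone_hull_add)
  have "t - \<alpha> - \<beta> \<le> 0"
  proof (rule ccontr)
    assume "\<not> t - \<alpha> - \<beta> \<le> 0"
    then have "(1 / (t - \<alpha> - \<beta>)) *\<^sub>R (a' + b') \<in> ?C"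
      using \<open>a' + b' \<in> ?C\<close> by (intro convex_cone_hull_mul) auto
    then show False using irredundant eq \<open>\<not> t - \<alpha> - \<beta> \<le> 0\<close> by simp
  qed
  then have "(\<alpha> + \<beta> - t) *\<^sub>R s \<in> ?K"
    using \<open>s \<in> S\<close> by (intro convex_cone_hull_mul hull_inc) auto
  moreover have "(a' + b') + (\<alpha> + \<beta> - t) *\<^sub>R s = 0"
    using eq by (simp add: algebra_simps)
  ultimately have "a' + b' = 0"
    using zero_summands \<open>a' + b' \<in> ?C\<close> C_sub by blast
  then have "a' = 0" using zero_summands ab C_sub by blast
  then show "a \<in> halfline s" using ab by (simp add: halfline_mem)
qed

section \<open>Primitive generators\<close>

lemma finite_lattice_multiples:
  fixes s :: "real^'n"
  assumes "s \<noteq> 0"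
  shows "finite {t. 0 < t \<and> t \<le> 1 \<and> lattice_pt (t *\<^sub>R s)}" (is "finite ?T")
proof -
  obtain i where si: "s $ i \<noteq> 0" using assms by (metis vec_eq_iff zero_index)
  have "?T \<subseteq> (\<lambda>j. of_int j / s $ i) ` {-\<lceil>\<bar>s $ i\<bar>\<rceil>..\<lceil>\<bar>s $ i\<bar>\<rceil>}"
  proof
    fix t assume t: "t \<in> ?T"
    then obtain j where j: "t * s $ i = of_int j"
      by (auto simp: lattice_pt_def elim!: Ints_cases)
    have "\<bar>t * s $ i\<bar> \<le> \<bar>s $ i\<bar>" using t by (auto simp: abs_mult mult_left_le_one_le)
    then have "\<bar>j\<bar> \<le> \<lceil>\<bar>s $ i\<bar>\<rceil>" using j by linarith
    moreover have "t = of_int j / s $ i" using j si by (simp add: field_simps)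
    ultimately show "t \<in> (\<lambda>j. of_int j / s $ i) ` {-\<lceil>\<bar>s $ i\<bar>\<rceil>..\<lceil>\<bar>s $ i\<bar>\<rceil>}"
      by (intro image_eqI[where x=j]) auto
  qed
  then show ?thesis by (rule finite_subset) simp
qed

lemma least_lattice_multiple:
  fixes s :: "real^'n"
  assumes "lattice_pt s" and "s \<noteq> 0"
  obtains t0 where "0 < t0" "lattice_pt (t0 *\<^sub>R s)"
    and "\<And>t. 0 \<le> t \<Longrightarrow> lattice_pt (t *\<^sub>R s) \<Longrightarrow> \<exists>k::nat. t = real k * t0"
proof -
  define T where "T = {t. 0 < t \<and> t \<le> 1 \<and> lattice_pt (t *\<^sub>R s)}"
  have "finite T" unfolding T_def using assms(2) by (rule finite_lattice_multiples)
  moreover have "1 \<in> T" using assms by (simp add: T_def)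
  ultimately have t0: "Min T \<in> T" and t0_least: "\<And>t. t \<in> T \<Longrightarrow> Min T \<le> t"
    by (auto intro: Min_in)
  define t0 where "t0 = Min T"
  have "0 < t0" "lattice_pt (t0 *\<^sub>R s)" using t0 by (auto simp: T_def t0_def)
  moreover have "\<exists>k::nat. t = real k * t0" if "0 \<le> t" "lattice_pt (t *\<^sub>R s)" for t
  proof -
    txt \<open>The remainder of \<open>t\<close> modulo \<open>t0\<close> is a lattice multiple smaller than \<open>t0\<close>.\<close>
    define k where "k = \<lfloor>t / t0\<rfloor>"
    define r where "r = t - of_int k * t0"
    have "0 \<le> r" "r < t0"
      using \<open>0 < t0\<close> floor_divide_lower[of t0 t] floor_divide_upper[of t0 t]
      by (simp_all add: r_def k_def algebra_simps)
    have "lattice_pt (t *\<^sub>R s - of_int k *\<^sub>R (t0 *\<^sub>R s))"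
      using that(2) \<open>lattice_pt (t0 *\<^sub>R s)\<close> unfolding lattice_pt_def
      by (simp add: Ints_diff Ints_mult mult.assoc)
    moreover have "r *\<^sub>R s = t *\<^sub>R s - of_int k *\<^sub>R (t0 *\<^sub>R s)" by (simp add: r_def algebra_simps)
    ultimately have "lattice_pt (r *\<^sub>R s)" by simp
    moreover have "t0 \<le> 1" using t0 by (simp add: T_def t0_def)
    ultimately have "r \<notin> T \<Longrightarrow> r = 0"
      using \<open>0 \<le> r\<close> \<open>r < t0\<close> by (auto simp: T_def)
    then have "r = 0"
      using t0_least[of r] \<open>r < t0\<close> by (force simp: t0_def)
    moreover have "0 \<le> k" using that \<open>0 < t0\<close> by (simp add: k_def)
    ultimately have "t = real (nat k) * t0" by (simp add: r_def)
    then show ?thesis by blast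
  qed
  ultimately show ?thesis using that by blast
qed

lemma prim_gen_halfline:
  fixes s :: "real^'n"
  assumes "lattice_pt s" and "s \<noteq> 0"
  shows "\<exists>t>0. prim_gen (halfline s) = t *\<^sub>R s"
proof -
  obtain t0 where t0: "0 < t0" "lattice_pt (t0 *\<^sub>R s)"
    and multiple: "\<And>t. 0 \<le> t \<Longrightarrow> lattice_pt (t *\<^sub>R s) \<Longrightarrow> \<exists>k::nat. t = real k * t0"
    using least_lattice_multiple[OF assms] by blast
  let ?prim = "\<lambda>v. v \<in> halfline s \<and> lattice_pt v \<and> v \<noteq> 0 \<and>
      (\<forall>w\<in>halfline s. lattice_pt w \<longrightarrow> (\<exists>k::nat. w = real k *\<^sub>R v))"
  have prim_t0: "?prim (t0 *\<^sub>R s)"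
    using t0 \<open>s \<noteq> 0\<close> multiple by (auto simp: halfline_def)
  have "v = t0 *\<^sub>R s" if prim_v: "?prim v" for v
  proof -
    obtain k :: nat where k: "v = real k *\<^sub>R (t0 *\<^sub>R s)" using prim_t0 prim_v by blast
    obtain l :: nat where l: "t0 *\<^sub>R s = real l *\<^sub>R v" using prim_t0 prim_v by blast
    have "t0 *\<^sub>R s = (real l * real k) *\<^sub>R (t0 *\<^sub>R s)"
      using l unfolding k by simp
    then have "(real l * real k - 1) *\<^sub>R (t0 *\<^sub>R s) = 0"
      by (simp add: algebra_simps)
    then have "l * k = 1" using prim_t0 by (simp flip: of_nat_mult)
    then show ?thesis using k by simp
  qed
  then have "prim_gen (halfline s) = t0 *\<^sub>R s"
    unfolding prim_gen_def using prim_t0 by (intro the_equality) blast+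
  then show ?thesis using \<open>0 < t0\<close> by blast
qed

lemma convex_dual_cone: "convex (dual_cone C)"
proof -
  have "dual_cone C = (\<Inter>n\<in>C. {m. 0 \<le> n \<bullet> m})"
    by (auto simp: dual_cone_def inner_commute)
  then show ?thesis by (simp add: convex_INT convex_halfspace_ge)
qed

lemma interior_dual_cone_pos:
  assumes "m \<in> interior (dual_cone C)" and "n \<in> C" and "n \<noteq> 0"
  shows "0 < m \<bullet> n"
proof -
  obtain \<epsilon> where "0 < \<epsilon>" "ball m \<epsilon> \<subseteq> dual_cone C"
    using assms(1) mem_interior by blast
  define q where "q = m - (\<epsilon> / 2 / norm n) *\<^sub>R n"
  have "dist m q < \<epsilon>" using \<open>0 < \<epsilon>\<close> \<open>n \<noteq> 0\<close> by (simp add: q_def dist_norm)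
  then have "0 \<le> q \<bullet> n" using \<open>ball m \<epsilon> \<subseteq> dual_cone C\<close> \<open>n \<in> C\<close> by (auto simp: dual_cone_def)
  moreover have "q \<bullet> n = m \<bullet> n - \<epsilon> / 2 * norm n"
    using \<open>n \<noteq> 0\<close> by (simp add: q_def inner_diff_left power2_norm_eq_inner[symmetric] power2_eq_square)
  moreover have "0 < \<epsilon> / 2 * norm n" using \<open>0 < \<epsilon>\<close> \<open>n \<noteq> 0\<close> by simp
  ultimately show ?thesis by linarith
qed

lemma interior_nonempty_full_dim:
  fixes C :: "'a::euclidean_space set"
  assumes "convex C" and "C \<noteq> {}" and "aff_dim C = DIM('a)"
  shows "interior C \<noteq> {}"
proof -
  have "rel_interior C = interior C"
    using assms(3) by (intro rel_interior_interior) (simp add: aff_dim_eq_full)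
  then show ?thesis using rel_interior_eq_empty[OF assms(1)] assms(2) by simp
qed

section \<open>Geometric realizations\<close>

lemma continuous_map_scaleR:
  fixes g :: "'a \<Rightarrow> 'b::real_normed_vector"
  shows "continuous_map X euclideanreal f \<Longrightarrow> continuous_map X euclidean g
    \<Longrightarrow> continuous_map X euclidean (\<lambda>x. f x *\<^sub>R g x)"
  by (simp add: continuous_map_atin tendsto_scaleR)

lemma continuous_map_inner:
  fixes f g :: "'a \<Rightarrow> 'b::real_inner"
  shows "continuous_map X euclidean f \<Longrightarrow> continuous_map X euclidean g
    \<Longrightarrow> continuous_map X euclideanreal (\<lambda>x. f x \<bullet> g x)"
  by (simp add: continuous_map_atin tendsto_inner)

lemma continuous_map_real_Min:
  assumes "finite I" and "I \<noteq> {}" and "\<And>i. i \<in> I \<Longrightarrow> continuous_map X euclideanreal (f i)"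
  shows "continuous_map X euclideanreal (\<lambda>x. Min ((\<lambda>i. f i x) ` I))"
  using assms
proof (induction I rule: finite_ne_induct)
  case (insert i I)
  then show ?case by (simp add: continuous_map_real_min)
qed simp

definition geom_carrier :: "'a set \<Rightarrow> 'a set set \<Rightarrow> ('a \<Rightarrow> real) set" where
  "geom_carrier V K = {x \<in> extensional V. (\<forall>v\<in>V. 0 \<le> x v) \<and> (\<Sum>v\<in>V. x v) = 1 \<and> {v\<in>V. x v \<noteq> 0} \<in> K}"

lemma geom_real_eq: "geom_real V K = subtopology (powertop_real V) (geom_carrier V K)"
  by (simp add: geom_real_def geom_carrier_def)

lemma topspace_geom_real [simp]: "topspace (geom_real V K) = geom_carrier V K"
  by (auto simp: geom_real_eq geom_carrier_def PiE_def)

lemma continuous_map_geom_real_coord: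
  "v \<in> V \<Longrightarrow> continuous_map (geom_real V K) euclideanreal (\<lambda>x. x v)"
  unfolding geom_real_eq
  by (intro continuous_map_from_subtopology continuous_map_product_projection)

lemma continuous_map_into_geom_real:
  assumes "\<And>v. v \<in> V \<Longrightarrow> continuous_map X euclideanreal (\<lambda>z. f z v)"
    and "\<And>z. z \<in> topspace X \<Longrightarrow> f z \<in> geom_carrier V K"
  shows "continuous_map X (geom_real V K) f"
  unfolding geom_real_eq
  using assms by (auto simp: continuous_map_in_subtopology continuous_map_componentwise geom_carrier_def)

text \<open>The realization of a complex without nonempty simplices is the empty space, which
  \<^const>\<open>contractible_space\<close> counts as contractible.\<close>
lemma contractible_space_geom_real_trivial:
  assumes "\<And>\<Upsilon>. \<Upsilon> \<in> K \<Longrightarrow> \<Upsilon> = {}"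
  shows "contractible_space (geom_real V K)"
proof -
  have "topspace (geom_real V K) = {}"
    using assms by (fastforce simp: geom_carrier_def)
  then show ?thesis by (intro contractible_space_subset_singleton[where a=undefined]) simp
qed

lemma geom_carrier_segment:
  assumes "x \<in> geom_carrier V K" and "y \<in> geom_carrier V K" and "0 \<le> t" "t \<le> 1"
    and "{v\<in>V. x v \<noteq> 0} \<union> {v\<in>V. y v \<noteq> 0} \<in> K"
    and downward_closed: "\<And>A B. A \<in> K \<Longrightarrow> B \<subseteq> A \<Longrightarrow> B \<in> K"
  shows "restrict (\<lambda>v. (1 - t) * x v + t * y v) V \<in> geom_carrier V K"
proof -
  have "{v\<in>V. (1 - t) * x v + t * y v \<noteq> 0} \<subseteq> {v\<in>V. x v \<noteq> 0} \<union> {v\<in>V. y v \<noteq> 0}"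
    by auto
  then have "{v\<in>V. (1 - t) * x v + t * y v \<noteq> 0} \<in> K"
    using downward_closed[OF assms(5)] by blast
  moreover have "(\<Sum>v\<in>V. (1 - t) * x v + t * y v) = 1"
    using assms(1,2) by (simp add: geom_carrier_def sum.distrib flip: sum_distrib_left)
  moreover have "\<forall>v\<in>V. 0 \<le> (1 - t) * x v + t * y v"
    using assms(1-4) by (simp add: geom_carrier_def)
  moreover have "{v\<in>V. restrict (\<lambda>v. (1 - t) * x v + t * y v) V v \<noteq> 0}
      = {v\<in>V. (1 - t) * x v + t * y v \<noteq> 0}"
    by auto
  ultimately show ?thesis
    unfolding geom_carrier_def by simp
qed

section \<open>Rays of a full-dimensional pointed rational cone\<close>

locale pointed_rational_cone =
  fixes \<sigma> :: "(real^'n) set" and S :: "(real^'n) set"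
  assumes finite_S: "finite S" and lattice_S: "\<forall>v\<in>S. lattice_pt v"
    and cone_eq: "\<sigma> = gen_cone S" and pointed: "strongly_convex \<sigma>"
    and full_dim: "aff_dim \<sigma> = int CARD('n)"
begin

lemma cone_eq_hull: "\<sigma> = convex_cone hull S"
  using cone_eq gen_cone_eq_convex_cone_hull finite_S by simp

lemma convex_cone: "convex_cone \<sigma>"
  using cone_eq convex_cone_gen_cone by simp

lemma zero_mem: "0 \<in> \<sigma>"
  using convex_cone by (rule convex_cone_contains_0)

lemma scaleR_mem: "x \<in> \<sigma> \<Longrightarrow> 0 \<le> c \<Longrightarrow> c *\<^sub>R x \<in> \<sigma>"
  using convex_cone convex_cone_scaleR by blast

lemma sum_mem: "(\<And>i. i \<in> I \<Longrightarrow> 0 \<le> c i \<and> u i \<in> \<sigma>) \<Longrightarrow> (\<Sum>i\<in>I. c i *\<^sub>R u i) \<in> \<sigma>"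
  using convex_cone by (rule convex_cone_sum)

lemma generators_subset: "S \<subseteq> \<sigma>"
  by (subst cone_eq_hull) (rule hull_subset)

lemma neg_mem_eq_0: "x \<in> \<sigma> \<Longrightarrow> - x \<in> \<sigma> \<Longrightarrow> x = 0"
  using pointed unfolding strongly_convex_def by (metis IntI image_eqI minus_minus singletonD)

lemma finite_rays: "finite (rays \<sigma>)"
proof -
  have "polyhedron \<sigma>"
    using cone_eq_hull finite_S by (simp add: polyhedron_convex_cone_hull)
  then show ?thesis
    unfolding rays_def by (rule finite_subset[rotated, OF finite_polyhedron_faces]) auto
qed

lemma interior_nonempty: "interior \<sigma> \<noteq> {}"
  using interior_nonempty_full_dim[of \<sigma>] convex_cone zero_mem full_dim by (auto simp: convex_cone_def)

lemma face_contains_generator: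
  assumes "F face_of \<sigma>" and "y \<in> F" and "y \<noteq> 0"
  obtains s where "s \<in> S" "s \<noteq> 0" "s \<in> F"
proof -
  have "y \<in> gen_cone S" using assms(1,2) face_of_imp_subset cone_eq by blast
  then obtain c where c: "\<forall>v\<in>S. 0 \<le> c v" "y = (\<Sum>v\<in>S. c v *\<^sub>R v)"
    unfolding gen_cone_def by blast
  have "\<exists>s\<in>S. c s \<noteq> 0 \<and> s \<noteq> 0"
  proof (rule ccontr)
    assume "\<not> ?thesis"
    then have "(\<Sum>v\<in>S. c v *\<^sub>R v) = 0" by (intro sum.neutral) auto
    then show False using c(2) \<open>y \<noteq> 0\<close> by simp
  qed
  then obtain s where s: "s \<in> S" "c s \<noteq> 0" "s \<noteq> 0" by blast
  have "0 < c s" using c(1) s by (simp add: less_le)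
  then have "s \<in> F"
    using face_of_convex_cone_sum[OF convex_cone assms(1) finite_S, of c "\<lambda>v. v" s] c generators_subset s(1)
      assms(2) by blast
  then show ?thesis using that s by blast
qed

lemma ray_eq_halfline:
  assumes "\<rho> \<in> rays \<sigma>"
  obtains s where "s \<in> S" "s \<noteq> 0" "\<rho> = halfline s"
proof -
  have face: "\<rho> face_of \<sigma>" and dim: "aff_dim \<rho> = 1" using assms by (auto simp: rays_def)
  have "\<not> \<rho> \<subseteq> {0}"
  proof
    assume "\<rho> \<subseteq> {0}"
    then have "aff_dim \<rho> \<le> aff_dim {0::real^'n}" by (rule aff_dim_subset)
    then show False using dim by simp
  qed
  then obtain s where s: "s \<in> S" "s \<noteq> 0" "s \<in> \<rho>"
    using face_contains_generator[OF face] by blast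
  have cone_\<rho>: "convex_cone \<rho>" using convex_cone_face_of[OF convex_cone face] s(3) by blast
  have "halfline s \<subseteq> \<rho>"
    using convex_cone_scaleR[OF cone_\<rho> _ \<open>s \<in> \<rho>\<close>] by (auto simp: halfline_def)
  moreover have "\<rho> \<subseteq> halfline s"
  proof
    fix z assume "z \<in> \<rho>"
    have "dim \<rho> = 1"
      using dim aff_dim_zero[of \<rho>] convex_cone_contains_0[OF cone_\<rho>] by (simp add: hull_inc)
    then have "span {s} = span \<rho>"
      using \<open>s \<in> \<rho>\<close> \<open>s \<noteq> 0\<close> by (intro dim_eq_span) auto
    then obtain t where t: "z = t *\<^sub>R s"
      using \<open>z \<in> \<rho>\<close> span_base[of z \<rho>] by (auto simp: span_singleton)
    show "z \<in> halfline s"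
    proof (cases "0 \<le> t")
      case False
      have "z \<in> \<sigma>" "- z \<in> \<sigma>"
        using \<open>z \<in> \<rho>\<close> face face_of_imp_subset generators_subset s False t scaleR_mem[of s "- t"] by auto
      then have "z = 0" by (rule neg_mem_eq_0)
      then show ?thesis using halfline_mem[of 0 s] by simp
    qed (simp add: t halfline_mem)
  qed
  ultimately show ?thesis using that s by blast
qed

lemma prim_gen_ray:
  assumes "\<rho> \<in> rays \<sigma>"
  shows "halfline (prim_gen \<rho>) = \<rho>" and "prim_gen \<rho> \<noteq> 0" and "prim_gen \<rho> \<in> \<sigma>"
proof -
  obtain s where s: "s \<in> S" "s \<noteq> 0" "\<rho> = halfline s" using ray_eq_halfline[OF assms] .
  then obtain t where "0 < t" "prim_gen \<rho> = t *\<^sub>R s"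
    using prim_gen_halfline[of s] lattice_S by auto
  then show "halfline (prim_gen \<rho>) = \<rho>" "prim_gen \<rho> \<noteq> 0" "prim_gen \<rho> \<in> \<sigma>"
    using s halfline_scaleR generators_subset scaleR_mem by auto
qed

lemma inj_on_prim_gen: "inj_on prim_gen (rays \<sigma>)"
  by (metis inj_onI prim_gen_ray(1))

lemma cone_hull_prim_gen: "\<sigma> = convex_cone hull (prim_gen ` rays \<sigma>)"
proof
  show "convex_cone hull (prim_gen ` rays \<sigma>) \<subseteq> \<sigma>"
    using prim_gen_ray(3) convex_cone by (intro hull_minimal) auto
  obtain T where T: "T \<subseteq> S" "\<sigma> = convex_cone hull T"
    and minimal: "\<And>T'. T' \<subseteq> S \<and> \<sigma> = convex_cone hull T' \<Longrightarrow> card T \<le> card T'"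
    using ex_has_least_nat[of "\<lambda>T. T \<subseteq> S \<and> \<sigma> = convex_cone hull T" S card] cone_eq_hull by blast
  have "s \<in> convex_cone hull (prim_gen ` rays \<sigma>)" if "s \<in> T" for s
  proof -
    have irredundant: "s \<notin> convex_cone hull (T - {s})"
    proof
      assume "s \<in> convex_cone hull (T - {s})"
      then have "\<sigma> = convex_cone hull (T - {s})"
        using T(2) hull_redundant[of s convex_cone "T - {s}"] \<open>s \<in> T\<close> by (simp add: insert_absorb)
      moreover have "card (T - {s}) < card T"
        using T(1) finite_S \<open>s \<in> T\<close> by (meson card_Diff1_less finite_subset)
      ultimately show False using minimal[of "T - {s}"] T(1) by auto
    qed
    then have "s \<noteq> 0" using convex_cone_hull_contains_0 by auto
    have "halfline s face_of convex_cone hull T"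
      by (rule halfline_face_of_convex_cone_hull) (use neg_mem_eq_0 T(2) \<open>s \<in> T\<close> irredundant in auto)
    then have \<rho>: "halfline s \<in> rays \<sigma>"
      using T(2) aff_dim_halfline[OF \<open>s \<noteq> 0\<close>] by (simp add: rays_def)
    have "s \<in> halfline (prim_gen (halfline s))"
      using prim_gen_ray(1)[OF \<rho>] halfline_self by simp
    then obtain t where "0 \<le> t" "s = t *\<^sub>R prim_gen (halfline s)"
      by (auto simp: halfline_def)
    moreover have "prim_gen (halfline s) \<in> convex_cone hull (prim_gen ` rays \<sigma>)"
      using \<rho> by (intro hull_inc imageI)
    ultimately show ?thesis using convex_cone_hull_mul by metis
  qed
  then show "\<sigma> \<subseteq> convex_cone hull (prim_gen ` rays \<sigma>)"
    unfolding T(2) by (intro hull_minimal convex_cone_convex_cone_hull) auto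
qed

lemma cone_rays_combination:
  assumes "y \<in> \<sigma>"
  obtains c where "\<forall>\<rho>\<in>rays \<sigma>. 0 \<le> c \<rho>" and "y = (\<Sum>\<rho>\<in>rays \<sigma>. c \<rho> *\<^sub>R prim_gen \<rho>)"
proof -
  have "y \<in> convex_cone hull (prim_gen ` rays \<sigma>)"
    using assms equalityD1[OF cone_hull_prim_gen] by blast
  then have "y \<in> gen_cone (prim_gen ` rays \<sigma>)"
    using gen_cone_eq_convex_cone_hull[of "prim_gen ` rays \<sigma>"] finite_rays by simp
  then obtain c where "\<forall>u\<in>prim_gen ` rays \<sigma>. 0 \<le> c u" "y = (\<Sum>u\<in>prim_gen ` rays \<sigma>. c u *\<^sub>R u)"
    unfolding gen_cone_def by blast
  then show ?thesis
    using that[of "c \<circ> prim_gen"] by (simp add: sum.reindex[OF inj_on_prim_gen])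
qed

lemma Xi_iff:
  "\<Upsilon> \<in> Xi \<sigma> \<longleftrightarrow> \<Upsilon> \<subseteq> rays \<sigma> \<and> (\<exists>F. F face_of \<sigma> \<and> F \<noteq> \<sigma> \<and> (\<forall>\<rho>\<in>\<Upsilon>. \<rho> \<subseteq> F))"
proof (cases "\<Upsilon> \<subseteq> rays \<sigma>")
  case True
  let ?faces = "{F. F face_of \<sigma> \<and> \<Upsilon> \<subseteq> {\<rho>\<in>rays \<sigma>. \<rho> \<subseteq> F}}"
  have "\<sigma> \<in> ?faces"
    using True face_of_refl[of \<sigma>] convex_cone face_of_imp_subset
    unfolding rays_def convex_cone_def by blast
  then have "min_face \<sigma> \<Upsilon> face_of \<sigma>"
    unfolding min_face_def by (intro face_of_Inter) auto
  moreover have "\<forall>\<rho>\<in>\<Upsilon>. \<rho> \<subseteq> min_face \<sigma> \<Upsilon>"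
    unfolding min_face_def by blast
  moreover have "min_face \<sigma> \<Upsilon> \<subseteq> F" if "F face_of \<sigma>" "\<forall>\<rho>\<in>\<Upsilon>. \<rho> \<subseteq> F" for F
    unfolding min_face_def using that True by blast
  ultimately have "min_face \<sigma> \<Upsilon> \<noteq> \<sigma> \<longleftrightarrow> (\<exists>F. F face_of \<sigma> \<and> F \<noteq> \<sigma> \<and> (\<forall>\<rho>\<in>\<Upsilon>. \<rho> \<subseteq> F))"
    by (metis face_of_imp_subset subset_antisym)
  then show ?thesis
    using True by (simp add: Xi_def)
qed (simp add: Xi_def)

lemma Xi_subset: "\<Upsilon> \<in> Xi \<sigma> \<Longrightarrow> \<Upsilon>' \<subseteq> \<Upsilon> \<Longrightarrow> \<Upsilon>' \<in> Xi \<sigma>"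
  unfolding Xi_iff by blast

lemma obtain_normals:
  obtains H where "finite H" "0 \<notin> H" "\<sigma> = {x. \<forall>h\<in>H. 0 \<le> h \<bullet> x}"
proof -
  have "polyhedron \<sigma>"
    using cone_eq_hull finite_S by (simp add: polyhedron_convex_cone_hull)
  then obtain F where F: "finite F" "\<sigma> = \<Inter> F" "\<forall>h\<in>F. \<exists>a b. a \<noteq> 0 \<and> h = {x. a \<bullet> x \<le> b}"
    unfolding polyhedron_def by blast
  then obtain a b where ab: "\<forall>h\<in>F. a h \<noteq> 0 \<and> h = {x. a h \<bullet> x \<le> b h}"
    by metis
  have mem_iff: "x \<in> h \<longleftrightarrow> a h \<bullet> x \<le> b h" if "h \<in> F" for h x
  proof -
    have "h = {x. a h \<bullet> x \<le> b h}" using ab that by blast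
    then show ?thesis by (metis mem_Collect_eq)
  qed
  txt \<open>The apex lies in every halfspace \<open>a \<bullet> x \<le> b\<close>, so \<open>b \<ge> 0\<close>; being conic, the cone
    then satisfies the homogeneous inequalities \<open>a \<bullet> x \<le> 0\<close>.\<close>
  have b_nonneg: "0 \<le> b h" if "h \<in> F" for h
    using mem_iff[OF that, of 0] zero_mem F(2) that by auto
  have "a h \<bullet> x \<le> 0" if "x \<in> \<sigma>" "h \<in> F" for x h
  proof (rule ccontr)
    assume "\<not> a h \<bullet> x \<le> 0"
    define t where "t = (\<bar>b h\<bar> + 1) / (a h \<bullet> x)"
    have "t *\<^sub>R x \<in> h"
      using scaleR_mem[OF \<open>x \<in> \<sigma>\<close>, of t] \<open>\<not> a h \<bullet> x \<le> 0\<close> F(2) \<open>h \<in> F\<close> by (auto simp: t_def)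
    moreover have "a h \<bullet> (t *\<^sub>R x) = \<bar>b h\<bar> + 1" using \<open>\<not> a h \<bullet> x \<le> 0\<close> by (simp add: t_def)
    ultimately show False using mem_iff[OF \<open>h \<in> F\<close>] by simp
  qed
  moreover have "x \<in> \<sigma>" if "\<forall>h\<in>F. a h \<bullet> x \<le> 0" for x
    using that mem_iff b_nonneg F(2) by force
  ultimately have "\<sigma> = {x. \<forall>h\<in>uminus ` a ` F. 0 \<le> h \<bullet> x}" by force
  moreover have "0 \<notin> uminus ` a ` F" using ab by auto
  moreover have "finite (uminus ` a ` F)" using F(1) by simp
  ultimately show ?thesis by (intro that)
qed

lemma exists_sign_vector:
  assumes "P \<subseteq> rays \<sigma>" and "aff_dim (dual_cone (sigma_Pi \<sigma> P)) = int CARD('n)"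
  obtains m where "\<forall>\<rho>\<in>P. m \<bullet> prim_gen \<rho> < 0" and "\<forall>\<rho>\<in>rays \<sigma> - P. 0 < m \<bullet> prim_gen \<rho>"
proof -
  let ?G = "(\<lambda>\<rho>. - prim_gen \<rho>) ` P \<union> prim_gen ` (rays \<sigma> - P)"
  have "0 \<in> dual_cone (sigma_Pi \<sigma> P)" by (simp add: dual_cone_def)
  then obtain m where m: "m \<in> interior (dual_cone (sigma_Pi \<sigma> P))"
    using interior_nonempty_full_dim[OF convex_dual_cone] assms(2) by fastforce
  have "finite P" using assms(1) finite_rays by (rule finite_subset)
  then have "finite ?G" using finite_rays by simp
  then have G_sub: "?G \<subseteq> sigma_Pi \<sigma> P"
    unfolding sigma_Pi_def by (simp add: gen_cone_eq_convex_cone_hull hull_subset)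
  have G_nonzero: "n \<noteq> 0" if "n \<in> ?G" for n
    using that assms(1) prim_gen_ray(2) by auto
  have pos: "0 < m \<bullet> n" if "n \<in> ?G" for n
    using interior_dual_cone_pos[OF m] G_sub G_nonzero that by blast
  show ?thesis
  proof (rule that)
    show "\<forall>\<rho>\<in>P. m \<bullet> prim_gen \<rho> < 0" using pos[of "- prim_gen _"] by auto
    show "\<forall>\<rho>\<in>rays \<sigma> - P. 0 < m \<bullet> prim_gen \<rho>" using pos by auto
  qed
qed

end

section \<open>Facet normals and the faces of boundary points\<close>

locale cone_with_normals = pointed_rational_cone \<sigma> S for \<sigma> :: "(real^'n) set" and S +
  fixes H :: "(real^'n) set"
  assumes finite_H: "finite H" and nonzero_H: "0 \<notin> H"
    and cone_eq_normals: "\<sigma> = {x. \<forall>h\<in>H. 0 \<le> h \<bullet> x}"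
begin

lemma normal_nonneg: "y \<in> \<sigma> \<Longrightarrow> h \<in> H \<Longrightarrow> 0 \<le> h \<bullet> y"
  using cone_eq_normals by blast

lemma normals_nonempty: "H \<noteq> {}"
proof
  assume "H = {}"
  then have "(1::real^'n) \<in> \<sigma>" "- 1 \<in> \<sigma>" using cone_eq_normals by auto
  then have "(1::real^'n) = 0" by (rule neg_mem_eq_0)
  then show False by (simp add: vec_eq_iff)
qed

lemma interior_iff: "y \<in> interior \<sigma> \<longleftrightarrow> (\<forall>h\<in>H. 0 < h \<bullet> y)"
proof (intro iffI ballI)
  fix h assume "y \<in> interior \<sigma>" "h \<in> H"
  moreover have "\<sigma> = dual_cone H"
    using cone_eq_normals by (simp add: dual_cone_def inner_commute)
  ultimately have "0 < y \<bullet> h"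
    using interior_dual_cone_pos[of y H h] nonzero_H by auto
  then show "0 < h \<bullet> y" by (simp add: inner_commute)
next
  assume "\<forall>h\<in>H. 0 < h \<bullet> y"
  then have "y \<in> (\<Inter>h\<in>H. {z. 0 < h \<bullet> z})" by blast
  moreover have "open (\<Inter>h\<in>H. {z. 0 < h \<bullet> z})"
    using finite_H by (intro open_INT) (auto intro: open_halfspace_gt)
  moreover have "(\<Inter>h\<in>H. {z. 0 < h \<bullet> z}) \<subseteq> \<sigma>"
    using cone_eq_normals by (auto simp: less_imp_le)
  ultimately show "y \<in> interior \<sigma>" using interior_maximal by blast
qed

lemma combination_normal_eq_0:
  assumes "\<forall>\<rho>\<in>rays \<sigma>. 0 \<le> c \<rho>" and "h \<in> H"
    and "h \<bullet> (\<Sum>\<rho>\<in>rays \<sigma>. c \<rho> *\<^sub>R prim_gen \<rho>) = 0" and "\<rho> \<in> rays \<sigma>" "0 < c \<rho>"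
  shows "h \<bullet> prim_gen \<rho> = 0"
proof -
  have "0 \<le> c \<rho>' * (h \<bullet> prim_gen \<rho>')" if "\<rho>' \<in> rays \<sigma>" for \<rho>'
    using assms(1) that normal_nonneg[OF prim_gen_ray(3)[OF that] assms(2)] by simp
  moreover have "(\<Sum>\<rho>\<in>rays \<sigma>. c \<rho> * (h \<bullet> prim_gen \<rho>)) = 0"
    using assms(3) by (simp add: inner_sum_right)
  ultimately have "\<forall>\<rho>'\<in>rays \<sigma>. c \<rho>' * (h \<bullet> prim_gen \<rho>') = 0"
    using sum_nonneg_eq_0_iff[OF finite_rays, of "\<lambda>\<rho>. c \<rho> * (h \<bullet> prim_gen \<rho>)"] by simp
  then have "c \<rho> * (h \<bullet> prim_gen \<rho>) = 0" using \<open>\<rho> \<in> rays \<sigma>\<close> by blast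
  then show ?thesis using \<open>0 < c \<rho>\<close> by simp
qed

lemma normal_pos_on_some_ray:
  assumes "h \<in> H"
  obtains \<rho> where "\<rho> \<in> rays \<sigma>" and "0 < h \<bullet> prim_gen \<rho>"
proof -
  obtain p where "p \<in> interior \<sigma>" using interior_nonempty by blast
  then have "0 < h \<bullet> p" using assms by (simp add: interior_iff)
  obtain d where "p = (\<Sum>\<rho>\<in>rays \<sigma>. d \<rho> *\<^sub>R prim_gen \<rho>)"
    using cone_rays_combination[of p] \<open>p \<in> interior \<sigma>\<close> interior_subset by blast
  then have "(\<Sum>\<rho>\<in>rays \<sigma>. d \<rho> * (h \<bullet> prim_gen \<rho>)) \<noteq> 0"
    using \<open>0 < h \<bullet> p\<close> by (simp add: inner_sum_right)
  then obtain \<rho> where "\<rho> \<in> rays \<sigma>" "d \<rho> * (h \<bullet> prim_gen \<rho>) \<noteq> 0"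
    by (rule sum.not_neutral_contains_not_neutral)
  moreover have "0 \<le> h \<bullet> prim_gen \<rho>"
    using normal_nonneg[OF prim_gen_ray(3)[OF \<open>\<rho> \<in> rays \<sigma>\<close>] assms] .
  ultimately show ?thesis
    using that[of \<rho>] by (simp add: less_le)
qed

lemma pos_combination_interior:
  assumes "\<forall>\<rho>\<in>rays \<sigma>. 0 < c \<rho>" and "h \<in> H"
  shows "0 < h \<bullet> (\<Sum>\<rho>\<in>rays \<sigma>. c \<rho> *\<^sub>R prim_gen \<rho>)"
proof -
  obtain \<rho> where \<rho>: "\<rho> \<in> rays \<sigma>" "0 < h \<bullet> prim_gen \<rho>"
    using normal_pos_on_some_ray[OF assms(2)] .
  have "0 < c \<rho> * (h \<bullet> prim_gen \<rho>)"
    using assms(1) \<rho> by simp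
  moreover have "0 \<le> c \<rho>' * (h \<bullet> prim_gen \<rho>')" if "\<rho>' \<in> rays \<sigma>" for \<rho>'
    using assms(1) that normal_nonneg[OF prim_gen_ray(3)[OF that] assms(2)] by (simp add: less_imp_le)
  ultimately have "0 < (\<Sum>\<rho>\<in>rays \<sigma>. c \<rho> * (h \<bullet> prim_gen \<rho>))"
    by (rule sum_pos2[OF finite_rays \<rho>(1)])
  then show ?thesis by (simp add: inner_sum_right)
qed

text \<open>The rays of the smallest face of \<open>\<sigma>\<close> containing \<open>y\<close>.\<close>
definition face_rays :: "real^'n \<Rightarrow> (real^'n) set set" where
  "face_rays y = {\<rho>\<in>rays \<sigma>. \<forall>h\<in>H. h \<bullet> y = 0 \<longrightarrow> h \<bullet> prim_gen \<rho> = 0}"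

lemma face_rays_scaleR: "0 < c \<Longrightarrow> face_rays (c *\<^sub>R y) = face_rays y"
  by (simp add: face_rays_def)

lemma support_subset_face_rays:
  assumes "\<forall>\<rho>\<in>rays \<sigma>. 0 \<le> x \<rho>"
  shows "{\<rho>\<in>rays \<sigma>. x \<rho> \<noteq> 0} \<subseteq> face_rays (\<Sum>\<rho>\<in>rays \<sigma>. x \<rho> *\<^sub>R prim_gen \<rho>)"
  using assms combination_normal_eq_0[OF assms] by (force simp: face_rays_def less_le)

lemma face_rays_in_Xi:
  assumes "y \<in> \<sigma>" and "h0 \<in> H" and "h0 \<bullet> y = 0"
  shows "face_rays y \<in> Xi \<sigma>"
proof -
  let ?T = "{h\<in>H. h \<bullet> y = 0}"
  define a where "a = (\<Sum>h\<in>?T. h)"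
  have a_inner: "a \<bullet> x = (\<Sum>h\<in>?T. h \<bullet> x)" for x
    by (simp add: a_def inner_sum_left)
  define F where "F = \<sigma> \<inter> {x. a \<bullet> x = 0}"
  have "F face_of \<sigma>"
    unfolding F_def using convex_cone normal_nonneg
    by (intro face_of_Int_supporting_hyperplane_ge) (auto simp: convex_cone_def a_inner intro: sum_nonneg)
  moreover have "F \<noteq> \<sigma>"
  proof -
    obtain p where "p \<in> interior \<sigma>" using interior_nonempty by blast
    then have "0 < a \<bullet> p"
      unfolding a_inner using assms(2,3) finite_H
      by (intro sum_pos2[of _ h0]) (auto simp: interior_iff less_imp_le)
    then have "p \<notin> F" by (simp add: F_def)
    then show ?thesis using \<open>p \<in> interior \<sigma>\<close> interior_subset by blast
  qed
  moreover have "\<rho> \<subseteq> F" if "\<rho> \<in> face_rays y" for \<rho>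
  proof
    fix x assume "x \<in> \<rho>"
    have \<rho>: "\<rho> \<in> rays \<sigma>" "\<forall>h\<in>?T. h \<bullet> prim_gen \<rho> = 0"
      using that by (auto simp: face_rays_def)
    then obtain t where "0 \<le> t" "x = t *\<^sub>R prim_gen \<rho>"
      using \<open>x \<in> \<rho>\<close> prim_gen_ray(1)[of \<rho>] by (auto simp: halfline_def)
    then show "x \<in> F"
      using \<rho> scaleR_mem[OF prim_gen_ray(3)] by (simp add: F_def a_inner)
  qed
  ultimately show ?thesis
    unfolding Xi_iff face_rays_def by blast
qed

lemma Xi_combination_on_boundary:
  assumes x: "\<forall>\<rho>\<in>rays \<sigma>. 0 \<le> x \<rho>" and X: "{\<rho>\<in>rays \<sigma>. x \<rho> \<noteq> 0} \<in> Xi \<sigma>"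
  obtains h where "h \<in> H" and "h \<bullet> (\<Sum>\<rho>\<in>rays \<sigma>. x \<rho> *\<^sub>R prim_gen \<rho>) = 0"
proof -
  let ?I = "{\<rho>\<in>rays \<sigma>. x \<rho> \<noteq> 0}"
  define y where "y = (\<Sum>\<rho>\<in>rays \<sigma>. x \<rho> *\<^sub>R prim_gen \<rho>)"
  have y_eq: "y = (\<Sum>\<rho>\<in>?I. x \<rho> *\<^sub>R prim_gen \<rho>)"
    unfolding y_def by (rule sum.mono_neutral_right) (auto simp: finite_rays)
  have "y \<notin> interior \<sigma>"
  proof (cases "?I = {}")
    case True
    then have "y = 0" by (simp add: y_eq)
    then show ?thesis using normals_nonempty by (auto simp: interior_iff)
  next
    case False
    obtain F where F: "F face_of \<sigma>" "F \<noteq> \<sigma>" "\<forall>\<rho>\<in>?I. \<rho> \<subseteq> F"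
      using X unfolding Xi_iff by blast
    have gens: "prim_gen \<rho> \<in> F" if "\<rho> \<in> ?I" for \<rho>
      using F(3) that prim_gen_ray(1)[of \<rho>] halfline_self[of "prim_gen \<rho>"] by auto
    then have "F \<noteq> {}" using False by blast
    then have "y \<in> F"
      unfolding y_eq using x gens by (intro convex_cone_sum convex_cone_face_of[OF convex_cone F(1)]) auto
    then show ?thesis using face_of_disjoint_interior[OF F(1,2)] by blast
  qed
  moreover have "y \<in> \<sigma>"
    unfolding y_def using x prim_gen_ray(3) by (intro sum_mem) auto
  ultimately show ?thesis
    using that normal_nonneg[of y] by (fastforce simp: interior_iff y_def not_less)
qed

text \<open>A continuous stand-in for the indicator function of \<^term>\<open>face_rays y\<close>.\<close>
definition ray_weight :: "(real^'n) set \<Rightarrow> real^'n \<Rightarrow> real" where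
  "ray_weight \<rho> y = (\<Prod>h\<in>{h\<in>H. 0 < h \<bullet> prim_gen \<rho>}. h \<bullet> y)"

lemma ray_weight_nonneg: "y \<in> \<sigma> \<Longrightarrow> 0 \<le> ray_weight \<rho> y"
  unfolding ray_weight_def by (intro prod_nonneg) (auto intro: normal_nonneg)

lemma ray_weight_pos_iff:
  assumes "y \<in> \<sigma>" and "\<rho> \<in> rays \<sigma>"
  shows "0 < ray_weight \<rho> y \<longleftrightarrow> \<rho> \<in> face_rays y"
proof -
  have "0 < ray_weight \<rho> y \<longleftrightarrow> ray_weight \<rho> y \<noteq> 0"
    using ray_weight_nonneg[OF assms(1), of \<rho>] by linarith
  also have "\<dots> \<longleftrightarrow> (\<forall>h\<in>H. 0 < h \<bullet> prim_gen \<rho> \<longrightarrow> h \<bullet> y \<noteq> 0)"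
    using finite_H by (auto simp: ray_weight_def)
  also have "\<dots> \<longleftrightarrow> \<rho> \<in> face_rays y"
    using assms(2) normal_nonneg[OF prim_gen_ray(3)[OF assms(2)]] by (auto simp: face_rays_def less_le)
  finally show ?thesis .
qed

lemma face_ray_neg:
  assumes "y \<in> \<sigma>" and "m \<bullet> y < 0"
  obtains \<rho> where "\<rho> \<in> face_rays y" and "m \<bullet> prim_gen \<rho> < 0"
proof -
  obtain c where c: "\<forall>\<rho>\<in>rays \<sigma>. 0 \<le> c \<rho>" "y = (\<Sum>\<rho>\<in>rays \<sigma>. c \<rho> *\<^sub>R prim_gen \<rho>)"
    using cone_rays_combination[OF assms(1)] by blast
  have "(\<Sum>\<rho>\<in>rays \<sigma>. c \<rho> * (m \<bullet> prim_gen \<rho>)) < 0"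
    using assms(2) c(2) by (simp add: inner_sum_right)
  then obtain \<rho> where "\<rho> \<in> rays \<sigma>" "c \<rho> * (m \<bullet> prim_gen \<rho>) < 0"
    by (meson not_le sum_nonneg)
  then have "\<rho> \<in> rays \<sigma>" "c \<rho> \<noteq> 0" "m \<bullet> prim_gen \<rho> < 0"
    using c(1) by (auto simp: mult_less_0_iff)
  moreover have "\<rho> \<in> face_rays y"
    using support_subset_face_rays[OF c(1)] c(2) calculation by blast
  ultimately show ?thesis using that by blast
qed

definition boundary_point :: "real^'n \<Rightarrow> real^'n \<Rightarrow> real^'n" where
  "boundary_point e y = y - Min ((\<lambda>h. (h \<bullet> y) / (h \<bullet> e)) ` H) *\<^sub>R e"

lemma
  assumes e: "\<forall>h\<in>H. 0 < h \<bullet> e"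
  shows boundary_point_mem: "boundary_point e y \<in> \<sigma>"
    and boundary_point_on_boundary: "\<exists>h\<in>H. h \<bullet> boundary_point e y = 0"
proof -
  let ?ratios = "(\<lambda>h. (h \<bullet> y) / (h \<bullet> e)) ` H"
  have inner_eq: "h \<bullet> boundary_point e y = (h \<bullet> e) * ((h \<bullet> y) / (h \<bullet> e) - Min ?ratios)"
    if "h \<in> H" for h
  proof -
    have "h \<bullet> e \<noteq> 0" using e that by auto
    then show ?thesis by (simp add: boundary_point_def inner_diff_right right_diff_distrib mult.commute)
  qed
  have "Min ?ratios \<le> (h \<bullet> y) / (h \<bullet> e)" if "h \<in> H" for h
    using finite_H that by simp
  then show "boundary_point e y \<in> \<sigma>"
    using e inner_eq cone_eq_normals by auto
  have "Min ?ratios \<in> ?ratios"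
    using finite_H normals_nonempty by (intro Min_in) auto
  then show "\<exists>h\<in>H. h \<bullet> boundary_point e y = 0"
    using inner_eq by auto
qed

lemma boundary_point_eq:
  assumes e: "\<forall>h\<in>H. 0 < h \<bullet> e" and "y \<in> \<sigma>" and "h0 \<in> H" and "h0 \<bullet> y = 0"
  shows "boundary_point e y = y"
proof -
  have "Min ((\<lambda>h. (h \<bullet> y) / (h \<bullet> e)) ` H) = 0"
    using finite_H assms normal_nonneg[OF \<open>y \<in> \<sigma>\<close>]
    by (intro Min_eqI) (auto intro!: divide_nonneg_pos image_eqI[where x=h0])
  then show ?thesis by (simp add: boundary_point_def)
qed

lemma exists_interior_orthogonal:
  assumes "P \<subseteq> rays \<sigma>" and "P \<noteq> {}" and "P \<noteq> rays \<sigma>"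
    and neg: "\<forall>\<rho>\<in>P. m \<bullet> prim_gen \<rho> < 0" and pos: "\<forall>\<rho>\<in>rays \<sigma> - P. 0 < m \<bullet> prim_gen \<rho>"
  obtains e where "\<forall>h\<in>H. 0 < h \<bullet> e" and "m \<bullet> e = 0"
proof -
  have "finite P" using assms(1) finite_rays finite_subset by blast
  define \<alpha> where "\<alpha> = (\<Sum>\<rho>\<in>rays \<sigma> - P. m \<bullet> prim_gen \<rho>)"
  define \<beta> where "\<beta> = (\<Sum>\<rho>\<in>P. - (m \<bullet> prim_gen \<rho>))"
  have "0 < \<alpha>"
    unfolding \<alpha>_def using assms(1,3) pos finite_rays by (intro sum_pos) auto
  have "0 < \<beta>"
    unfolding \<beta>_def using \<open>finite P\<close> assms(2) neg by (intro sum_pos) auto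
  txt \<open>Weight the rays of \<open>P\<close> by \<open>\<alpha>\<close> and the others by \<open>\<beta>\<close>, so that the contributions to
    \<open>m \<bullet> e\<close> cancel.\<close>
  define c where "c \<rho> = (if \<rho> \<in> P then \<alpha> else \<beta>)" for \<rho>
  define e where "e = (\<Sum>\<rho>\<in>rays \<sigma>. c \<rho> *\<^sub>R prim_gen \<rho>)"
  have "\<forall>h\<in>H. 0 < h \<bullet> e"
    unfolding e_def using \<open>0 < \<alpha>\<close> \<open>0 < \<beta>\<close> by (intro ballI pos_combination_interior) (auto simp: c_def)
  moreover have "m \<bullet> e = 0"
  proof -
    have "m \<bullet> e = (\<Sum>\<rho>\<in>rays \<sigma>. c \<rho> * (m \<bullet> prim_gen \<rho>))"
      by (simp add: e_def inner_sum_right)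
    also have "\<dots> = (\<Sum>\<rho>\<in>rays \<sigma>. if \<rho> \<in> P then \<alpha> * (m \<bullet> prim_gen \<rho>) else \<beta> * (m \<bullet> prim_gen \<rho>))"
      by (rule sum.cong) (auto simp: c_def)
    also have "\<dots> = (\<Sum>\<rho>\<in>P. \<alpha> * (m \<bullet> prim_gen \<rho>)) + (\<Sum>\<rho>\<in>rays \<sigma> - P. \<beta> * (m \<bullet> prim_gen \<rho>))"
      using finite_rays assms(1) by (simp add: sum.If_cases Int_absorb1 flip: Diff_eq)
    also have "\<dots> = \<alpha> * (- \<beta>) + \<beta> * \<alpha>"
      by (simp add: \<alpha>_def \<beta>_def sum_distrib_left[symmetric] sum_negf)
    finally show ?thesis by simp
  qed
  ultimately show ?thesis using that by blast
qed

lemma continuous_map_boundary_point: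
  assumes "\<forall>h\<in>H. 0 < h \<bullet> e" and "continuous_map X euclidean f"
  shows "continuous_map X euclidean (\<lambda>x. boundary_point e (f x))"
proof -
  have "continuous_map X euclideanreal (\<lambda>x. Min ((\<lambda>h. (h \<bullet> f x) / (h \<bullet> e)) ` H))"
    using assms finite_H normals_nonempty
    by (intro continuous_map_real_Min continuous_map_real_divide continuous_map_inner) auto
  then show ?thesis
    unfolding boundary_point_def using assms(2) by (intro continuous_map_diff continuous_map_scaleR) auto
qed

lemma continuous_map_ray_weight:
  "continuous_map X euclidean f \<Longrightarrow> continuous_map X euclideanreal (\<lambda>x. ray_weight \<rho> (f x))"
  unfolding ray_weight_def using finite_H by (intro continuous_map_prod continuous_map_inner) auto

end

section \<open>The contraction\<close>

locale cone_contraction = cone_with_normals \<sigma> S H for \<sigma> :: "(real^'n) set" and S H +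
  fixes P :: "(real^'n) set set" and m e g :: "real^'n"
  assumes P_rays: "P \<subseteq> rays \<sigma>"
    and m_neg: "\<forall>\<rho>\<in>P. m \<bullet> prim_gen \<rho> < 0"
    and m_nonneg: "\<forall>\<rho>\<in>rays \<sigma> - P. 0 \<le> m \<bullet> prim_gen \<rho>"
    and e_interior: "\<forall>h\<in>H. 0 < h \<bullet> e" and e_orth: "m \<bullet> e = 0"
    and g_level: "m \<bullet> g = -1"
begin

abbreviation K_P :: "(real^'n) set set set" where
  "K_P \<equiv> {\<Upsilon>\<in>Xi \<sigma>. \<Upsilon> \<subseteq> P}"

abbreviation carrier_P :: "((real^'n) set \<Rightarrow> real) set" where
  "carrier_P \<equiv> geom_carrier (rays \<sigma>) K_P"

lemma K_P_downward_closed: "\<Upsilon> \<in> K_P \<Longrightarrow> \<Upsilon>' \<subseteq> \<Upsilon> \<Longrightarrow> \<Upsilon>' \<in> K_P"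
  using Xi_subset by blast

definition cone_point :: "((real^'n) set \<Rightarrow> real) \<Rightarrow> real^'n" where
  "cone_point x = (\<Sum>\<rho>\<in>rays \<sigma>. x \<rho> *\<^sub>R prim_gen \<rho>)"

lemma
  assumes "x \<in> carrier_P"
  shows cone_point_mem: "cone_point x \<in> \<sigma>"
    and cone_point_on_boundary: "\<exists>h\<in>H. h \<bullet> cone_point x = 0"
    and cone_point_level_neg: "m \<bullet> cone_point x < 0"
    and support_subset_face_rays_cone_point:
      "{\<rho>\<in>rays \<sigma>. x \<rho> \<noteq> 0} \<subseteq> face_rays (cone_point x) \<inter> P"
proof -
  have x: "\<forall>\<rho>\<in>rays \<sigma>. 0 \<le> x \<rho>" "(\<Sum>\<rho>\<in>rays \<sigma>. x \<rho>) = 1"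
    "{\<rho>\<in>rays \<sigma>. x \<rho> \<noteq> 0} \<in> Xi \<sigma>" "{\<rho>\<in>rays \<sigma>. x \<rho> \<noteq> 0} \<subseteq> P"
    using assms by (auto simp: geom_carrier_def)
  show "cone_point x \<in> \<sigma>"
    unfolding cone_point_def using x(1) prim_gen_ray(3) by (intro sum_mem) auto
  show "\<exists>h\<in>H. h \<bullet> cone_point x = 0"
    using Xi_combination_on_boundary[OF x(1,3)] unfolding cone_point_def by metis
  show "{\<rho>\<in>rays \<sigma>. x \<rho> \<noteq> 0} \<subseteq> face_rays (cone_point x) \<inter> P"
    using support_subset_face_rays[OF x(1)] x(4) unfolding cone_point_def by blast
  obtain \<rho> where "\<rho> \<in> rays \<sigma>" "x \<rho> \<noteq> 0"
    using x(2) sum.not_neutral_contains_not_neutral[of x "rays \<sigma>"] by auto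
  moreover have "\<rho> \<in> P" using x(4) \<open>\<rho> \<in> rays \<sigma>\<close> \<open>x \<rho> \<noteq> 0\<close> by blast
  ultimately have "0 < x \<rho> * - (m \<bullet> prim_gen \<rho>)"
    using x(1) m_neg by (intro mult_pos_pos) (auto simp: less_le)
  moreover have "0 \<le> x \<rho>' * - (m \<bullet> prim_gen \<rho>')" if "\<rho>' \<in> rays \<sigma>" for \<rho>'
  proof (cases "x \<rho>' = 0")
    case False
    then have "\<rho>' \<in> P" using x(4) that by blast
    then show ?thesis using x(1) m_neg that by (intro mult_nonneg_nonneg) (auto simp: less_imp_le)
  qed simp
  ultimately have "0 < (\<Sum>\<rho>\<in>rays \<sigma>. x \<rho> * - (m \<bullet> prim_gen \<rho>))"
    by (rule sum_pos2[OF finite_rays \<open>\<rho> \<in> rays \<sigma>\<close>])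
  then show "m \<bullet> cone_point x < 0"
    by (simp add: cone_point_def inner_sum_right sum_negf)
qed

definition slice_point :: "real \<Rightarrow> ((real^'n) set \<Rightarrow> real) \<Rightarrow> real^'n" where
  "slice_point t x = ((1 - t) / - (m \<bullet> cone_point x)) *\<^sub>R cone_point x + t *\<^sub>R g"

lemma slice_point_level:
  assumes "x \<in> carrier_P"
  shows "m \<bullet> slice_point t x = -1"
proof -
  have neg: "m \<bullet> cone_point x < 0" by (rule cone_point_level_neg[OF assms])
  have "m \<bullet> slice_point t x = (1 - t) / - (m \<bullet> cone_point x) * (m \<bullet> cone_point x) + t * (m \<bullet> g)"
    by (simp only: slice_point_def inner_add_right inner_scaleR_right)
  also have "\<dots> = -1"
    using neg g_level by (simp add: field_simps)
  finally show ?thesis .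
qed

definition face_weights :: "real^'n \<Rightarrow> (real^'n) set \<Rightarrow> real" where
  "face_weights y = restrict
     (\<lambda>\<rho>. if \<rho> \<in> P then ray_weight \<rho> y / (\<Sum>\<rho>'\<in>P. ray_weight \<rho>' y) else 0) (rays \<sigma>)"

lemma ray_weight_sum_pos:
  assumes "y \<in> \<sigma>" and "m \<bullet> y < 0"
  shows "0 < (\<Sum>\<rho>\<in>P. ray_weight \<rho> y)"
proof -
  obtain \<rho> where \<rho>: "\<rho> \<in> face_rays y" "m \<bullet> prim_gen \<rho> < 0"
    using face_ray_neg[OF assms] .
  then have "\<rho> \<in> rays \<sigma>" by (simp add: face_rays_def)
  then have "\<rho> \<in> P" using \<rho>(2) m_nonneg by force
  moreover have "0 < ray_weight \<rho> y" using ray_weight_pos_iff[OF assms(1) \<open>\<rho> \<in> rays \<sigma>\<close>] \<rho>(1) by simp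
  moreover have "finite P" using P_rays finite_rays finite_subset by blast
  ultimately show ?thesis
    using ray_weight_nonneg[OF assms(1)] by (intro sum_pos2[of P \<rho>]) auto
qed

lemma
  assumes "y \<in> \<sigma>" and "h0 \<in> H" "h0 \<bullet> y = 0" and "m \<bullet> y < 0"
  shows support_face_weights: "{\<rho>\<in>rays \<sigma>. face_weights y \<rho> \<noteq> 0} \<subseteq> face_rays y \<inter> P"
    and face_weights_mem: "face_weights y \<in> carrier_P"
proof -
  let ?D = "\<Sum>\<rho>\<in>P. ray_weight \<rho> y"
  have D: "0 < ?D" by (rule ray_weight_sum_pos[OF assms(1,4)])
  show supp: "{\<rho>\<in>rays \<sigma>. face_weights y \<rho> \<noteq> 0} \<subseteq> face_rays y \<inter> P"
    using ray_weight_pos_iff[OF assms(1)] ray_weight_nonneg[OF assms(1)]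
    by (auto simp: face_weights_def less_le split: if_splits)
  have "(\<Sum>\<rho>\<in>rays \<sigma>. face_weights y \<rho>)
      = (\<Sum>\<rho>\<in>rays \<sigma>. if \<rho> \<in> P then ray_weight \<rho> y / ?D else 0)"
    by (rule sum.cong) (simp_all add: face_weights_def)
  also have "\<dots> = (\<Sum>\<rho>\<in>P. ray_weight \<rho> y / ?D)"
    using P_rays finite_rays by (simp add: sum.If_cases Int_absorb1)
  also have "\<dots> = 1"
    using D by (simp flip: sum_divide_distrib)
  finally have "(\<Sum>\<rho>\<in>rays \<sigma>. face_weights y \<rho>) = 1" .
  moreover have "{\<rho>\<in>rays \<sigma>. face_weights y \<rho> \<noteq> 0} \<in> K_P"
    using Xi_subset[OF face_rays_in_Xi[OF assms(1-3)]] supp by blast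
  moreover have "\<forall>\<rho>\<in>rays \<sigma>. 0 \<le> face_weights y \<rho>"
    using D ray_weight_nonneg[OF assms(1)] by (simp add: face_weights_def)
  ultimately show "face_weights y \<in> carrier_P"
    by (simp add: geom_carrier_def face_weights_def)
qed

definition face_homotopy :: "real \<times> ((real^'n) set \<Rightarrow> real) \<Rightarrow> (real^'n) set \<Rightarrow> real" where
  "face_homotopy z = face_weights (boundary_point e (slice_point (fst z) (snd z)))"

lemma
  assumes "x \<in> carrier_P"
  shows boundary_slice_point_mem: "boundary_point e (slice_point t x) \<in> \<sigma>"
    and boundary_slice_point_level: "m \<bullet> boundary_point e (slice_point t x) = -1"
  using boundary_point_mem[OF e_interior] slice_point_level[OF assms] e_orth
  by (simp_all add: boundary_point_def inner_diff_right)

lemma face_homotopy_mem: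
  assumes "x \<in> carrier_P"
  shows "face_homotopy (t, x) \<in> carrier_P"
proof -
  obtain h0 where "h0 \<in> H" "h0 \<bullet> boundary_point e (slice_point t x) = 0"
    using boundary_point_on_boundary[OF e_interior] by blast
  then show ?thesis
    unfolding face_homotopy_def
    using boundary_slice_point_mem[OF assms] boundary_slice_point_level[OF assms]
    by (intro face_weights_mem) auto
qed

lemma support_face_homotopy_start:
  assumes "x \<in> carrier_P"
  shows "{\<rho>\<in>rays \<sigma>. face_homotopy (0, x) \<rho> \<noteq> 0} \<subseteq> face_rays (cone_point x) \<inter> P"
proof -
  define c where "c = 1 / - (m \<bullet> cone_point x)"
  have "0 < c" using cone_point_level_neg[OF assms] by (simp add: c_def)
  obtain h0 where h0: "h0 \<in> H" "h0 \<bullet> cone_point x = 0"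
    using cone_point_on_boundary[OF assms] by blast
  have y: "slice_point 0 x = c *\<^sub>R cone_point x" by (simp add: slice_point_def c_def)
  have mem: "c *\<^sub>R cone_point x \<in> \<sigma>" and zero: "h0 \<bullet> (c *\<^sub>R cone_point x) = 0"
    and neg: "m \<bullet> (c *\<^sub>R cone_point x) < 0"
    using \<open>0 < c\<close> h0 cone_point_mem[OF assms] cone_point_level_neg[OF assms]
    by (auto intro: scaleR_mem simp: mult_pos_neg)
  have "face_homotopy (0, x) = face_weights (c *\<^sub>R cone_point x)"
    using boundary_point_eq[OF e_interior mem h0(1) zero] by (simp add: face_homotopy_def y)
  then show ?thesis
    using support_face_weights[OF mem h0(1) zero neg] face_rays_scaleR[OF \<open>0 < c\<close>] by simp
qed

abbreviation realization_P :: "((real^'n) set \<Rightarrow> real) topology" where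
  "realization_P \<equiv> geom_real (rays \<sigma>) K_P"

abbreviation cylinder_P :: "(real \<times> ((real^'n) set \<Rightarrow> real)) topology" where
  "cylinder_P \<equiv> prod_topology (top_of_set {0..1}) realization_P"

lemma topspace_cylinder_P: "topspace cylinder_P = {0..1} \<times> carrier_P"
  by simp

lemma continuous_map_cylinder_fst: "continuous_map cylinder_P euclideanreal fst"
  using continuous_map_fst continuous_map_in_subtopology by blast

lemma continuous_map_cylinder_coord:
  "\<rho> \<in> rays \<sigma> \<Longrightarrow> continuous_map cylinder_P euclideanreal (\<lambda>z. snd z \<rho>)"
  using continuous_map_compose[OF continuous_map_snd continuous_map_geom_real_coord]
  by (simp add: o_def)

lemma continuous_map_face_homotopy: "continuous_map cylinder_P realization_P face_homotopy"
proof (rule continuous_map_into_geom_real)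
  let ?W = "\<lambda>z. boundary_point e (slice_point (fst z) (snd z))"
  have "continuous_map cylinder_P euclidean (\<lambda>z. cone_point (snd z))"
    unfolding cone_point_def using finite_rays
    by (intro continuous_map_sum continuous_map_scaleR continuous_map_cylinder_coord) auto
  then have "continuous_map cylinder_P euclidean (\<lambda>z. slice_point (fst z) (snd z))"
    unfolding slice_point_def
    by (intro continuous_intros continuous_map_scaleR continuous_map_real_divide continuous_map_inner
        continuous_map_cylinder_fst) (auto simp: topspace_cylinder_P dest!: cone_point_level_neg)
  then have W: "continuous_map cylinder_P euclidean ?W"
    by (rule continuous_map_boundary_point[OF e_interior])
  have D: "(\<Sum>\<rho>'\<in>P. ray_weight \<rho>' (?W z)) \<noteq> 0" if z: "z \<in> topspace cylinder_P" for z
  proof -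
    have x: "snd z \<in> carrier_P" using z by (auto simp: topspace_cylinder_P)
    show ?thesis
      using ray_weight_sum_pos[OF boundary_slice_point_mem[OF x, of "fst z"]]
        boundary_slice_point_level[OF x, of "fst z"]
      by force
  qed
  have "finite P" using P_rays finite_rays finite_subset by blast
  fix \<rho> assume "\<rho> \<in> rays \<sigma>"
  show "continuous_map cylinder_P euclideanreal (\<lambda>z. face_homotopy z \<rho>)"
  proof (cases "\<rho> \<in> P")
    case True
    have "continuous_map cylinder_P euclideanreal
        (\<lambda>z. ray_weight \<rho> (?W z) / (\<Sum>\<rho>'\<in>P. ray_weight \<rho>' (?W z)))"
      using D \<open>finite P\<close>
      by (intro continuous_map_real_divide continuous_map_sum continuous_map_ray_weight W) auto
    then show ?thesis
      using True \<open>\<rho> \<in> rays \<sigma>\<close> by (simp add: face_homotopy_def face_weights_def)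
  qed (use \<open>\<rho> \<in> rays \<sigma>\<close> in \<open>simp add: face_homotopy_def face_weights_def\<close>)
next
  fix z assume "z \<in> topspace cylinder_P"
  then show "face_homotopy z \<in> carrier_P"
    using face_homotopy_mem by (auto simp: topspace_cylinder_P)
qed

definition straight_homotopy :: "real \<times> ((real^'n) set \<Rightarrow> real) \<Rightarrow> (real^'n) set \<Rightarrow> real" where
  "straight_homotopy z = restrict (\<lambda>\<rho>. (1 - fst z) * snd z \<rho> + fst z * face_homotopy (0, snd z) \<rho>) (rays \<sigma>)"

lemma straight_homotopy_mem:
  assumes "t \<in> {0..1}" and "x \<in> carrier_P"
  shows "straight_homotopy (t, x) \<in> carrier_P"
proof -
  obtain h0 where "h0 \<in> H" "h0 \<bullet> cone_point x = 0"
    using cone_point_on_boundary[OF assms(2)] by blast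
  then have "face_rays (cone_point x) \<inter> P \<in> K_P"
    using Xi_subset[OF face_rays_in_Xi[OF cone_point_mem[OF assms(2)]]] by blast
  moreover have "{\<rho>\<in>rays \<sigma>. x \<rho> \<noteq> 0} \<union> {\<rho>\<in>rays \<sigma>. face_homotopy (0, x) \<rho> \<noteq> 0}
      \<subseteq> face_rays (cone_point x) \<inter> P"
    using support_subset_face_rays_cone_point[OF assms(2)] support_face_homotopy_start[OF assms(2)]
    by blast
  ultimately have supp: "{\<rho>\<in>rays \<sigma>. x \<rho> \<noteq> 0} \<union> {\<rho>\<in>rays \<sigma>. face_homotopy (0, x) \<rho> \<noteq> 0} \<in> K_P"
    by (rule K_P_downward_closed)
  have "face_homotopy (0, x) \<in> carrier_P" using face_homotopy_mem[OF assms(2)] .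
  then show ?thesis
    unfolding straight_homotopy_def fst_conv snd_conv using assms(1)
    by (intro geom_carrier_segment[OF assms(2) _ _ _ supp K_P_downward_closed]) auto
qed

lemma continuous_map_straight_homotopy: "continuous_map cylinder_P realization_P straight_homotopy"
proof (rule continuous_map_into_geom_real)
  have "continuous_map cylinder_P cylinder_P (\<lambda>z. (0, snd z))"
    by (intro continuous_map_pairedI continuous_map_snd) simp
  then have "continuous_map cylinder_P realization_P (\<lambda>z. face_homotopy (0, snd z))"
    using continuous_map_compose[OF _ continuous_map_face_homotopy] by (simp add: o_def)
  then have "continuous_map cylinder_P euclideanreal (\<lambda>z. face_homotopy (0, snd z) \<rho>)"
    if "\<rho> \<in> rays \<sigma>" for \<rho>
    using continuous_map_compose[OF _ continuous_map_geom_real_coord[OF that]] by (simp add: o_def)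
  then show "continuous_map cylinder_P euclideanreal (\<lambda>z. straight_homotopy z \<rho>)"
    if "\<rho> \<in> rays \<sigma>" for \<rho>
    unfolding straight_homotopy_def using that
    by (simp, intro continuous_intros continuous_map_cylinder_fst continuous_map_cylinder_coord) auto
next
  fix z assume "z \<in> topspace cylinder_P"
  then show "straight_homotopy z \<in> carrier_P"
    using straight_homotopy_mem by (auto simp: topspace_cylinder_P)
qed

theorem contractible_space_realization_P: "contractible_space realization_P"
proof -
  have "homotopic_with (\<lambda>x. True) realization_P realization_P id (\<lambda>x. face_homotopy (0, x))"
  proof -
    have "straight_homotopy (0, x) = x" "straight_homotopy (1, x) = face_homotopy (0, x)"
      if "x \<in> carrier_P" for x
      using that face_homotopy_mem[of x 0]
      by (auto simp: straight_homotopy_def geom_carrier_def extensional_restrict)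
    then show ?thesis
      using continuous_map_straight_homotopy by (subst homotopic_with) auto
  qed
  moreover have "homotopic_with (\<lambda>x. True) realization_P realization_P
      (\<lambda>x. face_homotopy (0, x)) (\<lambda>x. face_homotopy (1, undefined))"
  proof -
    have "face_homotopy (1, x) = face_homotopy (1, undefined)" for x
      by (simp add: face_homotopy_def slice_point_def)
    then show ?thesis
      using continuous_map_face_homotopy by (subst homotopic_with) auto
  qed
  ultimately show ?thesis
    unfolding contractible_space_def using homotopic_with_trans by blast
qed

end

context cone_with_normals
begin

lemma contractible_space_realization:
  assumes "P \<subseteq> rays \<sigma>" and "P \<noteq> {}" and "P \<noteq> rays \<sigma>"
    and m: "\<forall>\<rho>\<in>P. m \<bullet> prim_gen \<rho> < 0" "\<forall>\<rho>\<in>rays \<sigma> - P. 0 < m \<bullet> prim_gen \<rho>"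
  shows "contractible_space (geom_real (rays \<sigma>) {\<Upsilon>\<in>Xi \<sigma>. \<Upsilon> \<subseteq> P})"
proof -
  obtain e where e: "\<forall>h\<in>H. 0 < h \<bullet> e" "m \<bullet> e = 0"
    using exists_interior_orthogonal[OF assms] .
  obtain \<rho> where "\<rho> \<in> P" using assms(2) by blast
  define g where "g = (1 / - (m \<bullet> prim_gen \<rho>)) *\<^sub>R prim_gen \<rho>"
  have "m \<bullet> prim_gen \<rho> < 0" using m(1) \<open>\<rho> \<in> P\<close> by blast
  then have "m \<bullet> g = -1" by (simp add: g_def)
  then interpret cone_contraction \<sigma> S H P m e g
    using assms(1) m e by unfold_locales (auto simp: less_imp_le)
  show ?thesis by (rule contractible_space_realization_P)
qed

end

theorem mainTheorem8:
  fixes \<sigma> :: "(real^'n) set" and P :: "(real^'n) set set"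
  assumes "rational_polyhedral_cone \<sigma>"
    and "strongly_convex \<sigma>"
    and "aff_dim \<sigma> = int CARD('n)"
    and "P \<subseteq> rays \<sigma>"
    and "aff_dim (dual_cone (sigma_Pi \<sigma> P)) = int CARD('n)"
  shows "P = rays \<sigma> \<or>
         contractible_space (geom_real (rays \<sigma>) {\<Upsilon>\<in>Xi \<sigma>. \<Upsilon> \<subseteq> P})"
proof -
  consider "P = rays \<sigma>" | "P = {}" | "P \<noteq> {}" "P \<noteq> rays \<sigma>" by blast
  then show ?thesis
  proof cases
    case 2
    then show ?thesis using contractible_space_geom_real_trivial[of "{\<Upsilon>\<in>Xi \<sigma>. \<Upsilon> \<subseteq> P}"] by blast
  next
    case 3
    obtain S where "finite S" "\<forall>v\<in>S. lattice_pt v" "\<sigma> = gen_cone S"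
      using assms(1) unfolding rational_polyhedral_cone_def by blast
    then interpret pointed_rational_cone \<sigma> S using assms(2,3) by unfold_locales
    obtain H where "finite H" "0 \<notin> H" "\<sigma> = {x. \<forall>h\<in>H. 0 \<le> h \<bullet> x}" by (rule obtain_normals)
    then interpret cone_with_normals \<sigma> S H by unfold_locales
    obtain m where "\<forall>\<rho>\<in>P. m \<bullet> prim_gen \<rho> < 0" "\<forall>\<rho>\<in>rays \<sigma> - P. 0 < m \<bullet> prim_gen \<rho>"
      using exists_sign_vector[OF assms(4,5)] .
    then show ?thesis using contractible_space_realization[OF assms(4) 3] by blast
  qed simp
qed

end
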